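(* Let $A$ be a rational matrix with $m$ rows and $n$ columns, and let $b$ and $c$ be rational vectors. Consider the following procedure $\mathrm{maximize}(A,b,c)$. If $b$ has length $m$ and $c$ has length $n$, it forms the following finite list of non-strict linear constraints over rational variables $z_0,\dots,z_{n+m-1}$, where one writes $x=(z_0,\dots,z_{n-1})$ and $y=(z_n,\dots,z_{n+m-1})$: (i) $c\cdot x \ge b\cdot y$; (ii) $(Ax)_i \le b_i$ for each $i<m$; (iii) $(A^{T}y)_j = c_j$ for each $j<n$; (iv) $y_i\ge 0$ for each $i<m$. It then calls a simplex decision procedure on this list. That procedure either returns $\mathrm{Unsat}$ together with a list of constraint indices, or returns $\mathrm{Sat}$ together with an assignment of rational values to the variables that satisfies every constraint in the list. In the first case $\mathrm{maximize}$ returns $\mathrm{Some}(\mathrm{Unsat}(\ldots))$; in the second case it returns $\mathrm{Some}(\mathrm{Sat}(x,y))$, where $x\in\mathbb{Q}^n$ consists of the values of $z_0,\dots,z_{n-1}$ and $y\in\mathbb{Q}^m$ consists of the values of $z_n,\dots,z_{n+m-1}$. If the length conditions on $b$ and $c$ fail, it returns $\mathrm{None}$. Claim: if $\mathrm{maximize}(A,b,c)=\mathrm{Some}(\mathrm{Sat}(x,y))$, then $x$ is an optimal solution of the linear program "maximize $c\cdot x$ subject to $Ax\le b$". That is, $Ax\le b$ holds componentwise, and $c\cdot v\le c\cdot x$ for every $v\in\mathbb{Q}^n$ with $Av\le b$ componentwise.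
   Context: $\cdot$ denotes the dot product of vectors, and $\le$ between vectors is the componentwise order. The simplex decision procedure is sound: whenever it returns $\mathrm{Sat}$, the returned assignment satisfies all the constraints it was given. The set of optimal solutions of the primal program ("max_lp $A$ $b$ $c$" in the paper) is $\{x : Ax\le b \text{ and } \forall v\,(Av\le b \Rightarrow v\cdot c\le x\cdot c)\}$. *)

theory Defs
  imports "Jordan_Normal_Form.Matrix"
begin

text \<open>Linear polynomials over rational variables z_0, z_1, ... represented as
  lists of (variable index, coefficient) pairs.\<close>
type_synonym linpoly = "(nat \<times> rat) list"

definition eval_lp :: "linpoly \<Rightarrow> (nat \<Rightarrow> rat) \<Rightarrow> rat" where
  "eval_lp p v = sum_list (map (\<lambda>(i, a). a * v i) p)"

datatype constr = LEQ linpoly rat | GEQ linpoly rat | EQ linpoly rat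

fun sat_constr :: "(nat \<Rightarrow> rat) \<Rightarrow> constr \<Rightarrow> bool" where
  "sat_constr v (LEQ p r) = (eval_lp p v \<le> r)"
| "sat_constr v (GEQ p r) = (eval_lp p v \<ge> r)"
| "sat_constr v (EQ p r) = (eval_lp p v = r)"

datatype simplex_result = Unsat "nat list" | Sat "nat \<Rightarrow> rat"

definition simplex_sound :: "(constr list \<Rightarrow> simplex_result) \<Rightarrow> bool" where
  "simplex_sound simplex =
     (\<forall>cs v. simplex cs = Sat v \<longrightarrow> (\<forall>c\<in>set cs. sat_constr v c))"

datatype lp_result = LP_Unsat "nat list" | LP_Sat "rat vec" "rat vec"

definition lp_constraints :: "rat mat \<Rightarrow> rat vec \<Rightarrow> rat vec \<Rightarrow> constr list" where
  "lp_constraints A b c = (let n = dim_col A; m = dim_row A in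
     [GEQ (map (\<lambda>j. (j, c $ j)) [0..<n] @ map (\<lambda>i. (n + i, - (b $ i))) [0..<m]) 0]
     @ map (\<lambda>i. LEQ (map (\<lambda>j. (j, A $$ (i, j))) [0..<n]) (b $ i)) [0..<m]
     @ map (\<lambda>j. EQ (map (\<lambda>i. (n + i, A $$ (i, j))) [0..<m]) (c $ j)) [0..<n]
     @ map (\<lambda>i. GEQ [(n + i, 1)] 0) [0..<m])"

definition maximize :: "(constr list \<Rightarrow> simplex_result) \<Rightarrow> rat mat \<Rightarrow> rat vec \<Rightarrow> rat vec
    \<Rightarrow> lp_result option" where
  "maximize simplex A b c =
     (if dim_vec b = dim_row A \<and> dim_vec c = dim_col A then
        (case simplex (lp_constraints A b c) of
           Unsat I \<Rightarrow> Some (LP_Unsat I)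
         | Sat v \<Rightarrow> Some (LP_Sat (vec (dim_col A) (\<lambda>j. v j))
                                 (vec (dim_row A) (\<lambda>i. v (dim_col A + i)))))
      else None)"

definition max_lp :: "rat mat \<Rightarrow> rat vec \<Rightarrow> rat vec \<Rightarrow> rat vec set" where
  "max_lp A b c = {x \<in> carrier_vec (dim_col A). A *\<^sub>v x \<le> b \<and>
     (\<forall>v \<in> carrier_vec (dim_col A). A *\<^sub>v v \<le> b \<longrightarrow> v \<bullet> c \<le> x \<bullet> c)}"

end

theory Submission
  imports Defs
begin

text \<open>The constraints handed to the simplex procedure express that x is primal feasible,
  that y is dual feasible (y \<ge> 0 and A^T y = c), and that the duality gap is closed:
  c \<bullet> x \<ge> b \<bullet> y.  By weak duality every primal feasible v satisfies
  c \<bullet> v \<le> b \<bullet> y \<le> c \<bullet> x, so x is optimal.\<close>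

lemma eval_lp_Nil [simp]: "eval_lp [] v = 0"
  by (simp add: eval_lp_def)

lemma eval_lp_Cons [simp]: "eval_lp ((i, a) # p) v = a * v i + eval_lp p v"
  by (simp add: eval_lp_def)

lemma eval_lp_append [simp]: "eval_lp (p @ q) v = eval_lp p v + eval_lp q v"
  by (simp add: eval_lp_def)

lemma eval_lp_map_upt [simp]:
  "eval_lp (map (\<lambda>j. (g j, f j)) [0..<n]) v = (\<Sum>j<n. f j * v (g j))"
  unfolding eval_lp_def by (simp add: o_def sum_list_sum_nth atLeast0LessThan)

lemma scalar_prod_left_mono:
  fixes y u w :: "'a :: ordered_comm_semiring vec"
  assumes "0\<^sub>v (dim_vec y) \<le> y" "u \<le> w" "dim_vec u = dim_vec y"
  shows "y \<bullet> u \<le> y \<bullet> w"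
  using assms unfolding scalar_prod_def less_eq_vec_def
  by (auto intro!: sum_mono mult_left_mono)

lemma weak_duality:
  fixes A :: "'a :: ordered_comm_semiring mat"
  assumes A: "A \<in> carrier_mat m n" and v: "v \<in> carrier_vec n" and b: "b \<in> carrier_vec m"
    and primal: "A *\<^sub>v v \<le> b"
    and dual: "0\<^sub>v m \<le> y" "transpose_mat A *\<^sub>v y = c"
  shows "v \<bullet> c \<le> b \<bullet> y"
proof -
  have y: "y \<in> carrier_vec m"
    using dual(1) unfolding less_eq_vec_def by auto
  have "v \<bullet> c = (transpose_mat A *\<^sub>v y) \<bullet> v"
    using A v y dual(2) by (metis comm_scalar_prod mult_mat_vec_carrier transpose_carrier_mat)
  also have "\<dots> = y \<bullet> (A *\<^sub>v v)"
    using A v y by (rule transpose_vec_mult_scalar)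
  also have "\<dots> \<le> y \<bullet> b"
    using A y dual(1) primal by (intro scalar_prod_left_mono) auto
  also have "\<dots> = b \<bullet> y"
    by (rule comm_scalar_prod[OF y b])
  finally show ?thesis .
qed

lemma sat_lp_constraints:
  assumes A: "A \<in> carrier_mat m n" and b: "b \<in> carrier_vec m" and c: "c \<in> carrier_vec n"
    and sat: "\<forall>k \<in> set (lp_constraints A b c). sat_constr w k"
  defines "x \<equiv> vec n w" and "y \<equiv> vec m (\<lambda>i. w (n + i))"
  shows "A *\<^sub>v x \<le> b" and "0\<^sub>v m \<le> y" and "transpose_mat A *\<^sub>v y = c" and "b \<bullet> y \<le> x \<bullet> c"
proof -
  have dims: "dim_row A = m" "dim_col A = n" "dim_vec b = m" "dim_vec c = n"
    using A b c by auto
  have objective: "(\<Sum>i<m. b $ i * w (n + i)) \<le> (\<Sum>j<n. c $ j * w j)"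
    and primal: "\<And>i. i < m \<Longrightarrow> (\<Sum>j<n. A $$ (i, j) * w j) \<le> b $ i"
    and dual: "\<And>j. j < n \<Longrightarrow> (\<Sum>i<m. A $$ (i, j) * w (n + i)) = c $ j"
    and nonneg: "\<And>i. i < m \<Longrightarrow> 0 \<le> w (n + i)"
    using sat unfolding lp_constraints_def Let_def dims
    by (auto simp: sum_negf ball_Un)
  show "A *\<^sub>v x \<le> b"
    using primal unfolding less_eq_vec_def x_def
    by (auto simp: dims scalar_prod_def atLeast0LessThan)
  show "0\<^sub>v m \<le> y"
    using nonneg unfolding less_eq_vec_def y_def by auto
  show "transpose_mat A *\<^sub>v y = c"
    using dual by (intro eq_vecI) (auto simp: dims y_def scalar_prod_def atLeast0LessThan mult.commute)
  show "b \<bullet> y \<le> x \<bullet> c"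
    using objective by (auto simp: dims x_def y_def scalar_prod_def atLeast0LessThan mult.commute)
qed

lemma maximize_LP_SatE:
  assumes "maximize simplex A b c = Some (LP_Sat x y)"
  obtains w where "simplex (lp_constraints A b c) = Sat w"
    and "b \<in> carrier_vec (dim_row A)" and "c \<in> carrier_vec (dim_col A)"
    and "x = vec (dim_col A) w" and "y = vec (dim_row A) (\<lambda>i. w (dim_col A + i))"
proof -
  have "b \<in> carrier_vec (dim_row A)" "c \<in> carrier_vec (dim_col A)"
    using assms unfolding maximize_def carrier_vec_def by (auto split: if_splits)
  then show ?thesis
    using assms that unfolding maximize_def
    by (cases "simplex (lp_constraints A b c)") auto
qed

theorem mainTheorem2:
  fixes A :: "rat mat" and b c x y :: "rat vec"
    and simplex :: "constr list \<Rightarrow> simplex_result"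
  assumes "simplex_sound simplex"
    and "maximize simplex A b c = Some (LP_Sat x y)"
  shows "x \<in> max_lp A b c"
proof -
  obtain w where w: "simplex (lp_constraints A b c) = Sat w"
    and b: "b \<in> carrier_vec (dim_row A)" and c: "c \<in> carrier_vec (dim_col A)"
    and x: "x = vec (dim_col A) w" and y: "y = vec (dim_row A) (\<lambda>i. w (dim_col A + i))"
    using assms(2) by (rule maximize_LP_SatE)
  have A: "A \<in> carrier_mat (dim_row A) (dim_col A)"
    by simp
  have "\<forall>k \<in> set (lp_constraints A b c). sat_constr w k"
    using assms(1) w unfolding simplex_sound_def by blast
  note sat = sat_lp_constraints[OF A b c this, folded x y]
  have "v \<bullet> c \<le> x \<bullet> c" if "v \<in> carrier_vec (dim_col A)" "A *\<^sub>v v \<le> b" for v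
    using weak_duality[OF A that(1) b that(2) sat(2,3)] sat(4) by order
  with sat(1) show ?thesis
    unfolding max_lp_def x by auto
qed

end
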